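(* Let $D$ be an $n\times n$ diagonal matrix with positive integer diagonal entries and let $O\in\mathrm U(n)$. Then $$\min_{\substack{V\in\mathrm U(n)\\ [V,D]=0}}\|O-V\|\le 2n\,\|[O,D]\|.$$
   Context: $[X,Y]=XY-YX$; $\|\cdot\|$ denotes the operator norm. *)

theory Defs
  imports "HOL-Analysis.Analysis"
begin

text \<open>Complex n x n matrices are modelled as complex ^'n ^'n (n = CARD('n)).
  The operator norm is the norm of the induced linear map on complex ^'n
  with its Euclidean norm.\<close>

definition adjoint_matrix :: "complex ^'n ^'n \<Rightarrow> complex ^'n ^'n" where
  "adjoint_matrix A = (\<chi> i j. cnj (A $ j $ i))"

definition unitary_matrix :: "complex ^'n ^'n \<Rightarrow> bool" where
  "unitary_matrix U \<longleftrightarrow> U ** adjoint_matrix U = mat 1 \<and> adjoint_matrix U ** U = mat 1"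

definition commutator :: "complex ^'n ^'n \<Rightarrow> complex ^'n ^'n \<Rightarrow> complex ^'n ^'n" where
  "commutator X Y = X ** Y - Y ** X"

definition op_norm :: "complex ^'n ^'n \<Rightarrow> real" where
  "op_norm A = onorm (\<lambda>x. A *v x)"

end

theory Submission
  imports Defs
begin

text \<open>
  A matrix commutes with D iff it is block diagonal for the partition of the indices by the
  value of the diagonal entry of D. Distinct diagonal entries are integers and so differ by at
  least 1. Hence every off-block entry of U is dominated by the corresponding entry of [U,D],
  and the off-block part of U has norm at most \<epsilon> = n \<parallel>[U,D]\<parallel>.

  Let W maximise Re tr(W* U) over the compact group of block-diagonal unitaries, and let B be
  the block-diagonal part of U. Multiplying W by a phase on a line inside one block shows that
  W* B is positive semidefinite on every block, so B = W (W* B) is a polar decomposition.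
  As B is \<epsilon>-close to the unitary U, it stretches no vector by more than the factor
  1 \<plusminus> \<epsilon>, so the spectrum of W* B lies in [1 - \<epsilon>, 1 + \<epsilon>]; therefore
  \<parallel>B - W\<parallel> \<le> \<epsilon> and \<parallel>U - W\<parallel> \<le> 2\<epsilon>. The minimiser V does at least as well.
\<close>

section \<open>The complex inner product and unitary matrices\<close>

definition cinner :: "complex^'n \<Rightarrow> complex^'n \<Rightarrow> complex" where
  "cinner x y = (\<Sum>i\<in>UNIV. cnj (x$i) * y$i)"

lemma cinner_add_left: "cinner (x + y) z = cinner x z + cinner y z"
  by (simp add: cinner_def sum.distrib algebra_simps)

lemma cinner_add_right: "cinner x (y + z) = cinner x y + cinner x z"
  by (simp add: cinner_def sum.distrib algebra_simps)

lemma cinner_diff_right: "cinner x (y - z) = cinner x y - cinner x z"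
  by (simp add: cinner_def sum_subtractf algebra_simps)

lemma cinner_scale_left: "cinner (c *s x) y = cnj c * cinner x y"
  by (simp add: cinner_def sum_distrib_left algebra_simps)

lemma cinner_scale_right: "cinner x (c *s y) = c * cinner x y"
  by (simp add: cinner_def sum_distrib_left algebra_simps)

lemma norm_vec_power2: "(norm (x::'a::real_normed_vector^'n))^2 = (\<Sum>i\<in>UNIV. (norm (x$i))^2)"
  by (simp add: norm_vec_def L2_set_def sum_nonneg)

lemma cinner_self: "cinner x x = of_real ((norm x)^2)"
proof -
  have "cinner x x = (\<Sum>i\<in>UNIV. of_real ((cmod (x$i))^2))"
    unfolding cinner_def
    by (rule sum.cong) (auto simp: complex_norm_square mult.commute simp del: of_real_power)
  also have "\<dots> = of_real ((norm x)^2)"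
    by (simp add: norm_vec_power2)
  finally show ?thesis .
qed

lemma Re_cinner: "Re (cinner x y) = inner x y"
  by (simp add: cinner_def inner_vec_def inner_complex_def Re_sum)

lemma norm_cinner_le: "cmod (cinner x y) \<le> norm x * norm y"
proof -
  have "cmod (cinner x y) \<le> (\<Sum>i\<in>UNIV. \<bar>cmod (x$i)\<bar> * \<bar>cmod (y$i)\<bar>)"
    unfolding cinner_def by (rule order_trans[OF norm_sum]) (simp add: norm_mult)
  also have "\<dots> \<le> norm x * norm y"
    unfolding norm_vec_def by (rule L2_set_mult_ineq)
  finally show ?thesis .
qed

lemma cinner_adjoint: "cinner x (A *v y) = cinner (adjoint_matrix A *v x) y"
  unfolding cinner_def adjoint_matrix_def matrix_vector_mult_def
  by (simp add: sum_distrib_left sum_distrib_right algebra_simps) (rule sum.swap)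

lemma adjoint_adjoint [simp]: "adjoint_matrix (adjoint_matrix A) = A"
  by (simp add: adjoint_matrix_def vec_eq_iff)

lemma adjoint_mult: "adjoint_matrix (A ** B) = adjoint_matrix B ** adjoint_matrix A"
  by (simp add: adjoint_matrix_def vec_eq_iff matrix_matrix_mult_def mult.commute)

lemma adjoint_add: "adjoint_matrix (A + B) = adjoint_matrix A + adjoint_matrix B"
  by (simp add: adjoint_matrix_def vec_eq_iff)

lemma adjoint_mat_1 [simp]: "adjoint_matrix (mat 1) = (mat 1 :: complex^'n^'n)"
  by (simp add: adjoint_matrix_def vec_eq_iff mat_def)

lemma matrix_add_rdistrib: "((A::'a::semiring_1^'n^'m) + B) ** C = A ** C + B ** C"
  by (simp add: matrix_matrix_mult_def vec_eq_iff sum.distrib distrib_right)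

lemma unitary_adjoint: "unitary_matrix U \<Longrightarrow> unitary_matrix (adjoint_matrix U)"
  by (simp add: unitary_matrix_def)

lemma unitary_mult: "unitary_matrix U \<Longrightarrow> unitary_matrix V \<Longrightarrow> unitary_matrix (U ** V)"
  unfolding unitary_matrix_def adjoint_mult by (metis matrix_mul_assoc matrix_mul_rid)

lemma unitary_mat_1: "unitary_matrix (mat 1 :: complex^'n^'n)"
  by (simp add: unitary_matrix_def)

lemma norm_unitary_mult_vec:
  assumes "unitary_matrix U"
  shows "norm (U *v x) = norm x"
proof -
  have "cinner (U *v x) (U *v x) = cinner x x"
    using assms by (simp add: cinner_adjoint matrix_vector_mul_assoc unitary_matrix_def)
  then have "(norm (U *v x))^2 = (norm x)^2"
    by (simp only: cinner_self of_real_eq_iff)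
  then show ?thesis by (simp add: power2_eq_iff_nonneg)
qed

lemma norm_unitary:
  assumes "unitary_matrix (W::complex^'n^'n)"
  shows "norm W = sqrt (real CARD('n))"
proof -
  have "(norm (W$i))^2 = 1" for i
  proof -
    have "cinner (W$i) (W$i) = (W ** adjoint_matrix W)$i$i"
      by (simp add: matrix_matrix_mult_def adjoint_matrix_def cinner_def mult.commute)
    also have "\<dots> = 1"
      using assms by (simp add: unitary_matrix_def mat_def)
    finally show ?thesis by (simp only: cinner_self of_real_eq_1_iff)
  qed
  then have "(norm W)^2 = real CARD('n)"
    by (simp add: norm_vec_power2)
  then show ?thesis by (metis norm_ge_zero real_sqrt_unique)
qed

lemma closed_unitary: "closed {W::complex^'n^'n. unitary_matrix W}"
  unfolding unitary_matrix_def matrix_matrix_mult_def adjoint_matrix_def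
  by (intro closed_Collect_conj closed_Collect_eq continuous_intros)

section \<open>The operator norm\<close>

lemma bounded_linear_mult_vec: "bounded_linear (\<lambda>x. (A::complex^'n^'n) *v x)"
  by (simp add: linear_conv_bounded_linear)

lemma norm_mult_vec_le_op_norm: "norm (A *v x) \<le> op_norm A * norm x"
  unfolding op_norm_def by (rule onorm[OF bounded_linear_mult_vec])

lemma op_norm_le: "(\<And>x. norm (A *v x) \<le> b * norm x) \<Longrightarrow> op_norm (A::complex^'n^'n) \<le> b"
  unfolding op_norm_def by (rule onorm_le)

lemma op_norm_nonneg: "0 \<le> op_norm (A::complex^'n^'n)"
  unfolding op_norm_def by (rule onorm_pos_le[OF bounded_linear_mult_vec])

lemma op_norm_add_le: "op_norm (A + B) \<le> op_norm A + op_norm (B::complex^'n^'n)"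
  unfolding op_norm_def matrix_vector_mult_add_rdistrib
  by (rule onorm_triangle[OF bounded_linear_mult_vec bounded_linear_mult_vec])

lemma norm_mult_vec_le: "norm ((A::complex^'n^'n) *v x) \<le> norm A * norm x"
proof -
  have row: "cmod ((A *v x)$i) \<le> norm (A$i) * norm x" for i
  proof -
    have "(A *v x)$i = cinner (\<chi> j. cnj (A$i$j)) x"
      by (simp add: cinner_def matrix_vector_mult_def)
    moreover have "norm (\<chi> j. cnj (A$i$j)) = norm (A$i)"
      by (simp add: norm_vec_def)
    ultimately show ?thesis
      using norm_cinner_le[of "\<chi> j. cnj (A$i$j)" x] by simp
  qed
  have "(norm (A *v x))^2 \<le> (\<Sum>i\<in>UNIV. (norm (A$i) * norm x)^2)"
    unfolding norm_vec_power2[of "A *v x"] by (intro sum_mono power_mono row) simp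
  also have "\<dots> = (norm A * norm x)^2"
    by (simp add: power_mult_distrib sum_distrib_right[symmetric] norm_vec_power2[of A])
  finally show ?thesis
    by (rule power2_le_imp_le) simp
qed

lemma op_norm_le_norm: "op_norm A \<le> norm (A::complex^'n^'n)"
  by (rule op_norm_le[OF norm_mult_vec_le])

lemma continuous_on_op_norm: "continuous_on S (op_norm :: complex^'n^'n \<Rightarrow> real)"
proof (rule lipschitz_on_continuous_on[OF lipschitz_onI])
  fix A B :: "complex^'n^'n"
  have "op_norm A \<le> op_norm B + op_norm (A - B)" "op_norm B \<le> op_norm A + op_norm (B - A)"
    using op_norm_add_le[of B "A - B"] op_norm_add_le[of A "B - A"] by simp_all
  moreover have "op_norm (A - B) \<le> dist A B" "op_norm (B - A) \<le> dist A B"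
    using op_norm_le_norm[of "A - B"] op_norm_le_norm[of "B - A"]
    by (simp_all add: dist_norm norm_minus_commute)
  ultimately show "dist (op_norm A) (op_norm B) \<le> 1 * dist A B"
    by (simp add: dist_real_def abs_le_iff)
qed simp

lemma norm_axis_complex: "norm (axis j (1::complex) :: complex^'n) = 1"
proof -
  have "(cmod (axis j (1::complex) $ i))^2 = (if i = j then 1 else 0)" for i
    by (simp add: axis_def)
  then have "(\<Sum>i\<in>UNIV. (cmod (axis j (1::complex) $ i))^2) = (1::real)"
    by simp
  then show ?thesis
    by (simp add: norm_vec_def L2_set_def)
qed

lemma norm_nth_nth_le_op_norm: "cmod (A$i$j) \<le> op_norm (A::complex^'n^'n)"
proof -
  have "(A *v axis j 1)$i = (\<Sum>k\<in>UNIV. if k = j then A$i$j else 0)"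
    unfolding matrix_vector_mult_def vec_lambda_beta by (rule sum.cong) (auto simp: axis_def)
  then have "cmod (A$i$j) \<le> norm (A *v axis j 1)"
    using Finite_Cartesian_Product.norm_nth_le[of "A *v axis j 1" i] by simp
  also have "\<dots> \<le> op_norm A"
    using norm_mult_vec_le_op_norm[of A "axis j 1"] by (simp add: norm_axis_complex)
  finally show ?thesis .
qed

section \<open>Symmetric operators close to the identity\<close>

lemma quadratic_nonneg_discriminant:
  fixes a b c :: real
  assumes nonneg: "\<And>t. 0 \<le> a * t^2 + b * t + c"
  shows "b^2 \<le> 4 * a * c"
proof (cases "a = 0")
  case True
  have "b = 0"
  proof (rule ccontr)
    assume "b \<noteq> 0"
    then show False using nonneg[of "- (c + 1) / b"] True by simp
  qed
  then show ?thesis using True by simp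
next
  case False
  have "0 \<le> a"
  proof (rule ccontr)
    assume "\<not> 0 \<le> a"
    define t where "t = sqrt ((\<bar>c\<bar> + 1) / - a)"
    have "t^2 = (\<bar>c\<bar> + 1) / - a"
      using \<open>\<not> 0 \<le> a\<close> by (simp add: t_def divide_nonneg_neg)
    then have "a * t^2 = - (\<bar>c\<bar> + 1)"
      using \<open>\<not> 0 \<le> a\<close> by simp
    then show False
      using nonneg[of t] nonneg[of "- t"] by (simp add: abs_if split: if_splits)
  qed
  then have "0 < a" using False by simp
  have "0 \<le> a * (- b / (2 * a))^2 + b * (- b / (2 * a)) + c"
    by (rule nonneg)
  also have "\<dots> = (4 * a * c - b^2) / (4 * a)"
    using \<open>0 < a\<close> by (simp add: field_simps power2_eq_square)
  finally show ?thesis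
    using \<open>0 < a\<close> by (simp add: zero_le_divide_iff)
qed

lemma rayleigh_min_attained:
  fixes p :: "'a::euclidean_space \<Rightarrow> 'a"
  assumes lin: "linear p" and S: "subspace S" and y: "y \<in> S" "y \<noteq> 0"
  obtains x0 where "x0 \<in> S" "norm x0 = 1"
    "\<And>w. w \<in> S \<Longrightarrow> inner x0 (p x0) * (norm w)^2 \<le> inner w (p w)"
proof -
  define T where "T = S \<inter> sphere 0 1"
  have normalised: "(1 / norm w) *\<^sub>R w \<in> T" if "w \<in> S" "w \<noteq> 0" for w
    using that subspace_scale[OF S] by (simp add: T_def)
  have T: "compact T" "T \<noteq> {}"
    using normalised[OF y] unfolding T_def
    by (blast intro: closed_Int_compact[OF closed_subspace[OF S] compact_sphere])+
  have "continuous_on T (\<lambda>x. inner x (p x))"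
    using lin by (intro continuous_intros linear_continuous_on) (simp add: linear_conv_bounded_linear)
  then obtain x0 where x0: "x0 \<in> T"
    and min: "\<And>x. x \<in> T \<Longrightarrow> inner x0 (p x0) \<le> inner x (p x)"
    using continuous_attains_inf[OF T] by blast
  have "inner x0 (p x0) * (norm w)^2 \<le> inner w (p w)" if "w \<in> S" for w
  proof (cases "w = 0")
    case True
    then show ?thesis by (simp add: linear_0[OF lin])
  next
    case False
    have "inner x0 (p x0) \<le> inner ((1 / norm w) *\<^sub>R w) (p ((1 / norm w) *\<^sub>R w))"
      by (rule min[OF normalised[OF that False]])
    also have "\<dots> = inner w (p w) / (norm w)^2"
      by (simp add: linear_scale[OF lin] power2_eq_square)
    finally show ?thesis
      using False by (simp add: field_simps)
  qed
  then show ?thesis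
    using x0 that by (auto simp: T_def)
qed

lemma rayleigh_min_eigenvector:
  fixes p :: "'a::real_inner \<Rightarrow> 'a"
  assumes lin: "linear p" and S: "subspace S" and pS: "\<And>x. x \<in> S \<Longrightarrow> p x \<in> S"
    and sym: "\<And>x y. x \<in> S \<Longrightarrow> y \<in> S \<Longrightarrow> inner x (p y) = inner y (p x)"
    and x0: "x0 \<in> S" "norm x0 = 1"
    and min: "\<And>w. w \<in> S \<Longrightarrow> inner x0 (p x0) * (norm w)^2 \<le> inner w (p w)"
  shows "p x0 = inner x0 (p x0) *\<^sub>R x0"
proof -
  \<comment> \<open>Q is nonnegative on S and vanishes at x0, so its derivative at x0 in direction z vanishes.\<close>
  define s where "s = inner x0 (p x0)"
  define Q where "Q w = inner w (p w) - s * (norm w)^2" for w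
  define z where "z = p x0 - s *\<^sub>R x0"
  have zS: "z \<in> S"
    unfolding z_def by (intro subspace_diff subspace_scale S pS x0)
  have "inner (x0 + t *\<^sub>R z) (p (x0 + t *\<^sub>R z))
      = s + 2 * t * inner z (p x0) + t^2 * inner z (p z)" for t
    using sym[OF x0(1) zS]
    by (simp add: s_def linear_add[OF lin] linear_scale[OF lin] inner_add_left inner_add_right
        algebra_simps power2_eq_square)
  moreover have "(norm (x0 + t *\<^sub>R z))^2 = 1 + 2 * t * inner x0 z + t^2 * (norm z)^2" for t
  proof -
    have "inner x0 x0 = 1"
      using x0(2) by (simp add: power2_norm_eq_inner[symmetric])
    then show ?thesis
      unfolding power2_norm_eq_inner
      by (simp add: inner_add_left inner_add_right inner_commute algebra_simps power2_eq_square)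
  qed
  moreover have "inner z (p x0) - s * inner x0 z = (norm z)^2"
  proof -
    have "(norm z)^2 = inner z (p x0 - s *\<^sub>R x0)"
      by (simp only: power2_norm_eq_inner z_def[symmetric])
    then show ?thesis
      by (simp add: inner_diff_right inner_commute)
  qed
  ultimately have "Q (x0 + t *\<^sub>R z) = Q z * t^2 + 2 * (norm z)^2 * t" for t
    unfolding Q_def by (simp add: algebra_simps)
  moreover have "0 \<le> Q (x0 + t *\<^sub>R z)" for t
    unfolding Q_def s_def using min[of "x0 + t *\<^sub>R z"]
    by (simp add: subspace_add subspace_scale S x0(1) zS)
  ultimately have "(2 * (norm z)^2)^2 \<le> 4 * Q z * 0"
    by (intro quadratic_nonneg_discriminant) simp
  then have "z = 0" by simp
  then show ?thesis by (simp add: z_def s_def)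
qed

lemma symmetric_polarization_le:
  fixes q :: "'a::real_inner \<Rightarrow> 'a"
  assumes lin: "linear q" and S: "subspace S"
    and sym: "\<And>x y. x \<in> S \<Longrightarrow> y \<in> S \<Longrightarrow> inner x (q y) = inner y (q x)"
    and bound: "\<And>y. y \<in> S \<Longrightarrow> \<bar>inner y (q y)\<bar> \<le> e * (norm y)^2"
    and x: "x \<in> S" and y: "y \<in> S"
  shows "2 * inner y (q x) \<le> e * ((norm x)^2 + (norm y)^2)"
proof -
  have "inner (x + y) (q (x + y)) - inner (x - y) (q (x - y)) = 4 * inner y (q x)"
    using sym[OF x y]
    by (simp add: linear_add[OF lin] linear_diff[OF lin] inner_add_left inner_add_right
        inner_diff_left inner_diff_right)
  moreover have "inner (x + y) (q (x + y)) \<le> e * (norm (x + y))^2"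
    "- inner (x - y) (q (x - y)) \<le> e * (norm (x - y))^2"
    using bound[of "x + y"] bound[of "x - y"]
    by (auto simp: abs_le_iff subspace_add subspace_diff S x y)
  moreover have "(norm (x + y))^2 + (norm (x - y))^2 = 2 * ((norm x)^2 + (norm y)^2)"
    unfolding power2_norm_eq_inner
    by (simp add: inner_add_left inner_add_right inner_diff_left inner_diff_right inner_commute)
  then have "e * (norm (x + y))^2 + e * (norm (x - y))^2 = 2 * (e * ((norm x)^2 + (norm y)^2))"
    unfolding distrib_left[symmetric] by simp
  ultimately show ?thesis
    by linarith
qed

lemma norm_le_of_quadratic_form_le:
  fixes q :: "'a::real_inner \<Rightarrow> 'a"
  assumes lin: "linear q" and S: "subspace S" and qS: "\<And>x. x \<in> S \<Longrightarrow> q x \<in> S"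
    and sym: "\<And>x y. x \<in> S \<Longrightarrow> y \<in> S \<Longrightarrow> inner x (q y) = inner y (q x)"
    and bound: "\<And>y. y \<in> S \<Longrightarrow> \<bar>inner y (q y)\<bar> \<le> e * (norm y)^2"
    and x: "x \<in> S"
  shows "norm (q x) \<le> e * norm x"
proof (cases "x = 0")
  case True
  then show ?thesis by (simp add: linear_0[OF lin])
next
  case False
  define y where "y = q x"
  have "0 \<le> e * (norm x)^2"
    using bound[OF x] abs_ge_zero order_trans by blast
  then have e: "0 \<le> e"
    using False by (simp add: zero_le_mult_iff)
  have yS: "y \<in> S"
    unfolding y_def by (rule qS[OF x])
  have "2 * inner (t *\<^sub>R y) (q x) \<le> e * ((norm x)^2 + (norm (t *\<^sub>R y))^2)" for t
    by (rule symmetric_polarization_le[OF lin S sym bound x subspace_scale[OF S yS]])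
  then have "0 \<le> (e * (norm y)^2) * t^2 + (- 2 * (norm y)^2) * t + e * (norm x)^2" for t
    by (simp add: y_def power2_norm_eq_inner power_mult_distrib algebra_simps)
  then have "(- 2 * (norm y)^2)^2 \<le> 4 * (e * (norm y)^2) * (e * (norm x)^2)"
    by (rule quadratic_nonneg_discriminant)
  then have "(norm y)^2 * (norm y)^2 \<le> (norm y)^2 * (e * norm x)^2"
    by (simp add: power2_eq_square algebra_simps)
  then have "(norm y)^2 \<le> (e * norm x)^2"
    by (cases "y = 0") (simp, metis mult_le_cancel_left_pos zero_less_norm_iff zero_less_power)
  then show ?thesis
    unfolding y_def by (rule power2_le_imp_le) (simp add: e)
qed

lemma psd_quadratic_form_ge_of_norm_ge:
  fixes p :: "'a::euclidean_space \<Rightarrow> 'a"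
  assumes lin: "linear p" and S: "subspace S" and pS: "\<And>x. x \<in> S \<Longrightarrow> p x \<in> S"
    and sym: "\<And>x y. x \<in> S \<Longrightarrow> y \<in> S \<Longrightarrow> inner x (p y) = inner y (p x)"
    and psd: "\<And>x. x \<in> S \<Longrightarrow> 0 \<le> inner x (p x)"
    and lower: "\<And>x. x \<in> S \<Longrightarrow> c * norm x \<le> norm (p x)"
    and y: "y \<in> S"
  shows "c * (norm y)^2 \<le> inner y (p y)"
proof (cases "y = 0")
  case True
  then show ?thesis by (simp add: linear_0[OF lin])
next
  case False
  obtain x0 where x0: "x0 \<in> S" "norm x0 = 1"
    and min: "\<And>w. w \<in> S \<Longrightarrow> inner x0 (p x0) * (norm w)^2 \<le> inner w (p w)"
    using rayleigh_min_attained[OF lin S y False] by blast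
  have "p x0 = inner x0 (p x0) *\<^sub>R x0"
    by (rule rayleigh_min_eigenvector[OF lin S pS sym x0 min])
  then have "norm (p x0) = inner x0 (p x0)"
    using x0(2) psd[OF x0(1)] by (metis abs_of_nonneg mult.right_neutral norm_scaleR)
  then have "c \<le> inner x0 (p x0)"
    using lower[OF x0(1)] x0(2) by simp
  then have "c * (norm y)^2 \<le> inner x0 (p x0) * (norm y)^2"
    by (simp add: mult_right_mono)
  also have "\<dots> \<le> inner y (p y)"
    by (rule min[OF y])
  finally show ?thesis .
qed

lemma psd_near_isometry_close_to_id:
  fixes p :: "'a::euclidean_space \<Rightarrow> 'a"
  assumes lin: "linear p" and S: "subspace S" and pS: "\<And>x. x \<in> S \<Longrightarrow> p x \<in> S"
    and sym: "\<And>x y. x \<in> S \<Longrightarrow> y \<in> S \<Longrightarrow> inner x (p y) = inner y (p x)"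
    and psd: "\<And>x. x \<in> S \<Longrightarrow> 0 \<le> inner x (p x)"
    and lower: "\<And>x. x \<in> S \<Longrightarrow> (1 - e) * norm x \<le> norm (p x)"
    and upper: "\<And>x. x \<in> S \<Longrightarrow> norm (p x) \<le> (1 + e) * norm x"
    and x: "x \<in> S"
  shows "norm (p x - x) \<le> e * norm x"
proof -
  have rayleigh_lower: "(1 - e) * (norm y)^2 \<le> inner y (p y)" if "y \<in> S" for y
    by (rule psd_quadratic_form_ge_of_norm_ge[OF lin S pS sym psd lower that])
  have rayleigh_upper: "inner y (p y) \<le> (1 + e) * (norm y)^2" if y: "y \<in> S" for y
  proof -
    have "inner y (p y) \<le> norm y * norm (p y)"
      by (rule norm_cauchy_schwarz)
    also have "\<dots> \<le> norm y * ((1 + e) * norm y)"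
      by (rule mult_left_mono[OF upper[OF y]]) simp
    finally show ?thesis
      by (simp add: power2_eq_square algebra_simps)
  qed
  show ?thesis
  proof (rule norm_le_of_quadratic_form_le[where q = "\<lambda>y. p y - y", OF _ S _ _ _ x])
    show "linear (\<lambda>y. p y - y)"
      by (rule linear_compose_sub[OF lin linear_ident])
    show "p y - y \<in> S" if "y \<in> S" for y
      using that by (simp add: subspace_diff S pS)
    show "inner y (p z - z) = inner z (p y - y)" if "y \<in> S" "z \<in> S" for y z
      using sym[OF that] by (simp add: inner_diff_right inner_commute)
    show "\<bar>inner y (p y - y)\<bar> \<le> e * (norm y)^2" if "y \<in> S" for y
      using rayleigh_lower[OF that] rayleigh_upper[OF that]
      by (simp add: inner_diff_right power2_norm_eq_inner[symmetric] abs_le_iff algebra_simps)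
  qed
qed

section \<open>Block-diagonal matrices\<close>

definition block_diagonal :: "('n \<Rightarrow> 'b) \<Rightarrow> complex^'n^'n \<Rightarrow> bool" where
  "block_diagonal d W \<longleftrightarrow> (\<forall>i j. d i \<noteq> d j \<longrightarrow> W$i$j = 0)"

definition block_space :: "('n \<Rightarrow> 'b) \<Rightarrow> 'b \<Rightarrow> (complex^'n) set" where
  "block_space d k = {x. \<forall>i. d i \<noteq> k \<longrightarrow> x$i = 0}"

definition block_part :: "('n \<Rightarrow> 'b) \<Rightarrow> complex^'n^'n \<Rightarrow> complex^'n^'n" where
  "block_part d A = (\<chi> i j. if d i = d j then A$i$j else 0)"

definition block_proj :: "('n \<Rightarrow> 'b) \<Rightarrow> 'b \<Rightarrow> complex^'n \<Rightarrow> complex^'n" where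
  "block_proj d k x = (\<chi> i. if d i = k then x$i else 0)"

lemma block_diagonal_mult:
  "block_diagonal d A \<Longrightarrow> block_diagonal d B \<Longrightarrow> block_diagonal d (A ** B)"
  unfolding block_diagonal_def matrix_matrix_mult_def
  by (auto intro!: sum.neutral) (metis mult_zero_left mult_zero_right)

lemma block_diagonal_adjoint: "block_diagonal d A \<Longrightarrow> block_diagonal d (adjoint_matrix A)"
  unfolding block_diagonal_def adjoint_matrix_def by auto

lemma block_diagonal_mat_1: "block_diagonal d (mat 1)"
  unfolding block_diagonal_def mat_def by auto

lemma block_diagonal_add:
  "block_diagonal d A \<Longrightarrow> block_diagonal d B \<Longrightarrow> block_diagonal d (A + B)"
  unfolding block_diagonal_def by auto

lemma block_diagonal_diff:
  "block_diagonal d A \<Longrightarrow> block_diagonal d B \<Longrightarrow> block_diagonal d (A - B)"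
  unfolding block_diagonal_def by auto

lemma block_diagonal_block_part: "block_diagonal d (block_part d A)"
  by (simp add: block_diagonal_def block_part_def)

lemma subspace_block_space: "subspace (block_space d k)"
  by (auto simp: subspace_def block_space_def)

lemma block_space_scale: "x \<in> block_space d k \<Longrightarrow> c *s x \<in> block_space d k"
  unfolding block_space_def by auto

lemma block_proj_in_block_space: "block_proj d k x \<in> block_space d k"
  by (simp add: block_proj_def block_space_def)

lemma block_diagonal_mult_vec:
  "block_diagonal d A \<Longrightarrow> x \<in> block_space d k \<Longrightarrow> A *v x \<in> block_space d k"
  unfolding block_diagonal_def block_space_def matrix_vector_mult_def
  by (auto intro!: sum.neutral) (metis mult_zero_left mult_zero_right)

lemma cinner_off_block_part:
  assumes "x \<in> block_space d k" "y \<in> block_space d k"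
  shows "cinner y ((A - block_part d A) *v x) = 0"
proof -
  have "((A - block_part d A) *v x)$i = 0" if "d i = k" for i
    unfolding matrix_vector_mult_def using assms(1) that
    by (auto simp: block_part_def block_space_def intro!: sum.neutral)
  then have "cnj (y$i) * ((A - block_part d A) *v x)$i = 0" for i
    using assms(2) by (cases "d i = k") (auto simp: block_space_def)
  then show ?thesis
    unfolding cinner_def by (intro sum.neutral) blast
qed

lemma norm_block_diagonal_mult_vec_le:
  fixes H :: "complex^'n^'n"
  assumes H: "block_diagonal d H"
    and blocks: "\<And>k x. x \<in> block_space d k \<Longrightarrow> norm (H *v x) \<le> e * norm x"
    and e: "0 \<le> e"
  shows "norm (H *v x) \<le> e * norm x"
proof -
  have nth_mult_vec: "(H *v x)$i = (H *v block_proj d (d i) x)$i" for i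
    unfolding matrix_vector_mult_def block_proj_def
    using H by (auto simp: block_diagonal_def intro!: sum.cong)
  have off_block: "(H *v block_proj d k x)$i = 0" if "d i \<noteq> k" for i k
    using block_diagonal_mult_vec[OF H block_proj_in_block_space[of d k x]] that
    by (simp add: block_space_def)
  have norm_block_proj: "(norm (block_proj d k x))^2 = (\<Sum>i\<in>{i. d i = k}. (cmod (x$i))^2)" for k
  proof -
    have "(norm (block_proj d k x))^2 = (\<Sum>i\<in>UNIV. if d i = k then (cmod (x$i))^2 else 0)"
      unfolding norm_vec_power2 by (rule sum.cong) (auto simp: block_proj_def)
    then show ?thesis
      by (simp add: sum.If_cases)
  qed
  have "(norm (H *v x))^2 = (\<Sum>i\<in>UNIV. (cmod ((H *v block_proj d (d i) x)$i))^2)"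
    by (simp add: norm_vec_power2 nth_mult_vec[symmetric])
  also have "\<dots> = (\<Sum>k\<in>d ` UNIV. \<Sum>i\<in>{i. i \<in> UNIV \<and> d i = k}.
      (cmod ((H *v block_proj d (d i) x)$i))^2)"
    by (rule sum.group[symmetric]) auto
  also have "\<dots> = (\<Sum>k\<in>d ` UNIV. \<Sum>i\<in>{i. d i = k}. (cmod ((H *v block_proj d k x)$i))^2)"
    by (rule sum.cong) auto
  also have "\<dots> = (\<Sum>k\<in>d ` UNIV. (norm (H *v block_proj d k x))^2)"
    unfolding norm_vec_power2
    by (rule sum.cong[OF refl], rule sum.mono_neutral_left) (auto simp: off_block)
  also have "\<dots> \<le> (\<Sum>k\<in>d ` UNIV. (e * norm (block_proj d k x))^2)"
    by (rule sum_mono, rule power_mono[OF blocks[OF block_proj_in_block_space]]) simp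
  also have "\<dots> = e^2 * (\<Sum>k\<in>d ` UNIV. \<Sum>i\<in>{i. i \<in> UNIV \<and> d i = k}. (cmod (x$i))^2)"
    by (simp add: power_mult_distrib norm_block_proj sum_distrib_left)
  also have "\<dots> = (e * norm x)^2"
    by (subst sum.group) (auto simp: norm_vec_power2 power_mult_distrib)
  finally show ?thesis
    by (rule power2_le_imp_le) (simp add: e)
qed

lemma commutator_diagonal_nth:
  assumes diag: "\<And>i j. i \<noteq> j \<Longrightarrow> D$i$j = 0"
  shows "(commutator A D)$i$j = A$i$j * (D$j$j - D$i$i)"
proof -
  have "(A ** D)$i$j = A$i$j * D$j$j" "(D ** A)$i$j = D$i$i * A$i$j"
    unfolding matrix_matrix_mult_def vec_lambda_beta
    by (subst sum.remove[of UNIV j], simp, simp, simp add: diag)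
      (subst sum.remove[of UNIV i], simp, simp, simp add: diag)
  then show ?thesis
    by (simp add: commutator_def algebra_simps)
qed

lemma commutator_diagonal_eq_0_iff:
  assumes diag: "\<And>i j. i \<noteq> j \<Longrightarrow> D$i$j = 0"
  shows "commutator A D = 0 \<longleftrightarrow> block_diagonal (\<lambda>i. D$i$i) A"
proof -
  have "commutator A D = 0 \<longleftrightarrow> (\<forall>i j. A$i$j * (D$j$j - D$i$i) = 0)"
    by (simp add: vec_eq_iff commutator_diagonal_nth[OF diag])
  then show ?thesis
    unfolding block_diagonal_def by (metis eq_iff_diff_eq_0 mult_eq_0_iff)
qed

lemma op_norm_off_block_part_le:
  fixes A D :: "complex^'n^'n"
  assumes diag: "\<And>i j. i \<noteq> j \<Longrightarrow> D$i$j = 0"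
    and gap: "\<And>i j. D$i$i \<noteq> D$j$j \<Longrightarrow> 1 \<le> cmod (D$j$j - D$i$i)"
  shows "op_norm (A - block_part (\<lambda>i. D$i$i) A) \<le> real CARD('n) * op_norm (commutator A D)"
proof -
  define c where "c = op_norm (commutator A D)"
  define E where "E = A - block_part (\<lambda>i. D$i$i) A"
  have c: "0 \<le> c"
    by (simp add: c_def op_norm_nonneg)
  have "cmod (E$i$j) \<le> c" for i j
  proof (cases "D$i$i = D$j$j")
    case True
    then show ?thesis by (simp add: E_def block_part_def c)
  next
    case False
    have "cmod (E$i$j) = cmod (A$i$j)"
      using False by (simp add: E_def block_part_def)
    also have "\<dots> \<le> cmod (A$i$j) * cmod (D$j$j - D$i$i)"
      using gap[OF False] by (metis mult.right_neutral mult_left_mono norm_ge_zero)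
    also have "\<dots> = cmod ((commutator A D)$i$j)"
      by (simp add: commutator_diagonal_nth[OF diag] norm_mult)
    also have "\<dots> \<le> c"
      unfolding c_def by (rule norm_nth_nth_le_op_norm)
    finally show ?thesis .
  qed
  then have "(norm E)^2 \<le> (\<Sum>i\<in>(UNIV::'n set). \<Sum>j\<in>(UNIV::'n set). c^2)"
    unfolding norm_vec_power2[of E] norm_vec_power2[of "E$_"]
    by (intro sum_mono power_mono) simp_all
  also have "\<dots> = (real CARD('n) * c)^2"
    by (simp add: power2_eq_square)
  finally have "norm E \<le> real CARD('n) * c"
    by (rule power2_le_imp_le) (simp add: c)
  then show ?thesis
    unfolding E_def c_def using op_norm_le_norm order_trans by blast
qed

lemma compact_unitary_commutant:
  "compact {W::complex^'n^'n. unitary_matrix W \<and> commutator W D = 0}"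
proof -
  have "closed {W::complex^'n^'n. commutator W D = 0}"
    unfolding commutator_def matrix_matrix_mult_def
    by (intro closed_Collect_eq continuous_intros)
  then have "closed {W::complex^'n^'n. unitary_matrix W \<and> commutator W D = 0}"
    using closed_Int[OF closed_unitary] by (simp add: Collect_conj_eq)
  moreover have "bounded {W::complex^'n^'n. unitary_matrix W \<and> commutator W D = 0}"
    unfolding bounded_iff using norm_unitary by fastforce
  ultimately show ?thesis
    by (simp add: compact_eq_bounded_closed)
qed

section \<open>Maximising the real part of the trace pairing\<close>

definition frobenius_inner :: "complex^'n^'n \<Rightarrow> complex^'n^'n \<Rightarrow> complex" where
  "frobenius_inner A B = (\<Sum>i\<in>UNIV. \<Sum>j\<in>UNIV. cnj (A$i$j) * B$i$j)"

definition outer :: "complex \<Rightarrow> complex^'n \<Rightarrow> complex^'n \<Rightarrow> complex^'n^'n" where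
  "outer c a b = (\<chi> i j. c * a$i * cnj (b$j))"

lemma adjoint_outer: "adjoint_matrix (outer c a b) = outer (cnj c) b a"
  by (simp add: adjoint_matrix_def outer_def vec_eq_iff mult.commute mult.left_commute)

lemma outer_mult: "outer c a b ** outer c' a' b' = outer (c * c' * cinner b a') a b'"
  by (simp add: outer_def matrix_matrix_mult_def cinner_def vec_eq_iff sum_distrib_left
      sum_distrib_right mult_ac)

lemma outer_add: "outer c a b + outer c' a b = outer (c + c') a b"
  by (simp add: outer_def vec_eq_iff algebra_simps)

lemma outer_zero: "outer 0 a b = 0"
  by (simp add: outer_def vec_eq_iff)

lemma mult_outer: "W ** outer c a b = outer c (W *v a) b"
  by (simp add: outer_def matrix_matrix_mult_def matrix_vector_mult_def vec_eq_iff
      sum_distrib_left sum_distrib_right mult_ac)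

lemma block_diagonal_outer: "x \<in> block_space d k \<Longrightarrow> block_diagonal d (outer c x x)"
  unfolding block_diagonal_def block_space_def outer_def
  by auto (metis mult_zero_left mult_zero_right complex_cnj_zero)

text \<open>For a unit w, mat 1 + outer ((w - 1) / \<parallel>x\<parallel>^2) x x multiplies x by w and fixes the
  orthogonal complement of x.\<close>

lemma unitary_mat_1_plus_outer:
  assumes "x \<noteq> 0" "cmod w = 1"
  shows "unitary_matrix (mat 1 + outer ((w - 1) / of_real ((norm x)^2)) x x)"
proof -
  define c where "c = (w - 1) / of_real ((norm x)^2)"
  have "w * cnj w = 1"
    using assms(2) by (metis complex_norm_square mult.commute of_real_1 one_power2)
  then have "c + cnj c + c * cnj c * cinner x x = 0"
    using assms(1) unfolding c_def cinner_self by (simp add: field_simps power2_eq_square)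
  then have "outer c x x + outer (cnj c) x x + outer (c * cnj c * cinner x x) x x = 0"
    "outer (cnj c) x x + outer c x x + outer (cnj c * c * cinner x x) x x = 0"
    by (simp_all add: outer_add outer_zero algebra_simps)
  then show ?thesis
    unfolding unitary_matrix_def c_def[symmetric]
    by (simp add: adjoint_add adjoint_outer matrix_add_ldistrib matrix_add_rdistrib outer_mult
        add.assoc)
qed

lemma frobenius_inner_add_left:
  "frobenius_inner (A + B) U = frobenius_inner A U + frobenius_inner B U"
  by (simp add: frobenius_inner_def sum.distrib algebra_simps)

lemma frobenius_inner_outer: "frobenius_inner (outer c a b) U = cnj c * cinner a (U *v b)"
  by (simp add: frobenius_inner_def outer_def cinner_def matrix_vector_mult_def
      sum_distrib_left mult_ac)

lemma frobenius_inner_mult_perturbation: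
  "frobenius_inner (W ** (mat 1 + outer c x x)) U
    = frobenius_inner W U + cnj c * cinner (W *v x) (U *v x)"
  by (simp add: matrix_add_ldistrib mult_outer frobenius_inner_add_left frobenius_inner_outer)

lemma nonneg_real_if_Re_rotations_le:
  assumes rot: "\<And>w. cmod w = 1 \<Longrightarrow> Re (cnj w * z) \<le> Re z"
  shows "Im z = 0 \<and> 0 \<le> Re z"
proof (cases "z = 0")
  case True
  then show ?thesis by simp
next
  case False
  have "cnj (z / of_real (cmod z)) * z = of_real (cmod z)"
    using False by (simp add: complex_norm_square[symmetric] mult.commute field_simps power2_eq_square)
  then have "cmod z \<le> Re z"
    using rot[of "z / of_real (cmod z)"] False by (simp add: norm_divide power2_eq_square)
  then show ?thesis
    using complex_Re_le_cmod[of z] cmod_power2[of z] norm_ge_zero[of z] by auto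
qed

lemma Re_cinner_sym_if_real_quadratic_form:
  assumes real: "\<And>z. z \<in> S \<Longrightarrow> Im (cinner z (M *v z)) = 0"
    and S: "x \<in> S" "y \<in> S" "x + \<i> *s y \<in> S"
  shows "Re (cinner x (M *v y)) = Re (cinner y (M *v x))"
proof -
  have "cinner (x + \<i> *s y) (M *v (x + \<i> *s y))
      = cinner x (M *v x) + \<i> * cinner x (M *v y) - \<i> * cinner y (M *v x) + cinner y (M *v y)"
    by (simp add: matrix_vector_right_distrib vector_scalar_commute cinner_add_left
        cinner_add_right cinner_scale_left cinner_scale_right algebra_simps)
  then show ?thesis
    using real[OF S(1)] real[OF S(2)] real[OF S(3)] by simp
qed

lemma cinner_maximiser_nonneg:
  fixes U W0 :: "complex^'n^'n"
  assumes W0: "unitary_matrix W0" "block_diagonal d W0"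
    and max: "\<And>W. unitary_matrix W \<Longrightarrow> block_diagonal d W \<Longrightarrow>
      Re (frobenius_inner W U) \<le> Re (frobenius_inner W0 U)"
    and y: "y \<in> block_space d k"
  shows "Im (cinner (W0 *v y) (U *v y)) = 0 \<and> 0 \<le> Re (cinner (W0 *v y) (U *v y))"
proof (cases "y = 0")
  case True
  then show ?thesis by (simp add: cinner_def)
next
  case False
  show ?thesis
  proof (rule nonneg_real_if_Re_rotations_le)
    fix w :: complex
    assume w: "cmod w = 1"
    define c where "c = (w - 1) / of_real ((norm y)^2)"
    have "unitary_matrix (W0 ** (mat 1 + outer c y y))"
      unfolding c_def by (intro unitary_mult W0 unitary_mat_1_plus_outer False w)
    moreover have "block_diagonal d (W0 ** (mat 1 + outer c y y))"
      by (intro block_diagonal_mult block_diagonal_add block_diagonal_mat_1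
          block_diagonal_outer[OF y] W0)
    ultimately have "Re (cnj c * cinner (W0 *v y) (U *v y)) \<le> 0"
      using max by (fastforce simp: frobenius_inner_mult_perturbation)
    then have "Re (cnj (w - 1) * cinner (W0 *v y) (U *v y)) / (norm y)^2 \<le> 0"
      by (simp add: c_def)
    then show "Re (cnj w * cinner (W0 *v y) (U *v y)) \<le> Re (cinner (W0 *v y) (U *v y))"
      using False by (simp add: divide_le_0_iff algebra_simps)
  qed
qed

lemma norm_block_diagonal_minus_polar_le:
  fixes W B :: "complex^'n^'n"
  assumes W: "unitary_matrix W" "block_diagonal d W" and B: "block_diagonal d B"
    and psd: "\<And>k y. y \<in> block_space d k \<Longrightarrow>
      Im (cinner (W *v y) (B *v y)) = 0 \<and> 0 \<le> Re (cinner (W *v y) (B *v y))"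
    and lower: "\<And>y. (1 - e) * norm y \<le> norm (B *v y)"
    and upper: "\<And>y. norm (B *v y) \<le> (1 + e) * norm y"
    and e: "0 \<le> e"
  shows "norm ((B - W) *v x) \<le> e * norm x"
proof -
  define P where "P = adjoint_matrix W ** B"
  have P: "block_diagonal d P"
    unfolding P_def by (intro block_diagonal_mult block_diagonal_adjoint W B)
  have cinner_P: "cinner u (P *v v) = cinner (W *v u) (B *v v)" for u v
    by (simp add: P_def cinner_adjoint matrix_vector_mul_assoc[symmetric])
  have norm_P: "norm (P *v y) = norm (B *v y)" for y
    by (simp add: P_def matrix_vector_mul_assoc[symmetric]
        norm_unitary_mult_vec[OF unitary_adjoint[OF W(1)]])
  have "norm ((P - mat 1) *v y) \<le> e * norm y" if y: "y \<in> block_space d k" for y k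
  proof -
    have sym: "inner u (P *v v) = inner v (P *v u)"
      if "u \<in> block_space d k" "v \<in> block_space d k" for u v
    proof -
      have "Re (cinner u (P *v v)) = Re (cinner v (P *v u))"
        by (rule Re_cinner_sym_if_real_quadratic_form[of "block_space d k"])
          (use psd that in \<open>auto simp: cinner_P subspace_add[OF subspace_block_space]
            block_space_scale\<close>)
      then show ?thesis
        by (simp add: Re_cinner)
    qed
    have "norm (P *v y - y) \<le> e * norm y"
      by (rule psd_near_isometry_close_to_id[OF _ subspace_block_space _ sym _ _ _ y])
        (use psd lower upper in \<open>auto simp: Re_cinner[symmetric] cinner_P norm_P
          block_diagonal_mult_vec[OF P]\<close>)
    then show ?thesis
      by (simp add: matrix_vector_mult_diff_rdistrib)
  qed
  then have "norm ((P - mat 1) *v x) \<le> e * norm x"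
    by (rule norm_block_diagonal_mult_vec_le[OF block_diagonal_diff[OF P block_diagonal_mat_1] _ e])
  moreover have "W ** P = B"
    using W(1) by (simp add: P_def matrix_mul_assoc unitary_matrix_def)
  then have "(B - W) *v x = W *v ((P - mat 1) *v x)"
    by (simp add: matrix_vector_mult_diff_rdistrib matrix_vector_mult_diff_distrib
        matrix_vector_mul_assoc)
  ultimately show ?thesis
    by (simp add: norm_unitary_mult_vec[OF W(1)])
qed

lemma op_norm_diff_maximiser_le:
  fixes U W0 :: "complex^'n^'n"
  assumes U: "unitary_matrix U" and W0: "unitary_matrix W0" "block_diagonal d W0"
    and max: "\<And>W. unitary_matrix W \<Longrightarrow> block_diagonal d W \<Longrightarrow>
      Re (frobenius_inner W U) \<le> Re (frobenius_inner W0 U)"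
    and off_block: "op_norm (U - block_part d U) \<le> e"
  shows "op_norm (U - W0) \<le> 2 * e"
proof -
  define B where "B = block_part d U"
  have e: "0 \<le> e"
    using off_block op_norm_nonneg order_trans by blast
  have near: "norm (U *v y - B *v y) \<le> e * norm y" for y
  proof -
    have "norm ((U - B) *v y) \<le> op_norm (U - B) * norm y"
      by (rule norm_mult_vec_le_op_norm)
    also have "\<dots> \<le> e * norm y"
      using off_block by (simp add: B_def mult_right_mono)
    finally show ?thesis
      by (simp add: matrix_vector_mult_diff_rdistrib)
  qed
  have polar: "norm ((B - W0) *v x) \<le> e * norm x" for x
  proof (rule norm_block_diagonal_minus_polar_le[OF W0 _ _ _ _ e])
    show "block_diagonal d B"
      by (simp add: B_def block_diagonal_block_part)
    show "Im (cinner (W0 *v y) (B *v y)) = 0 \<and> 0 \<le> Re (cinner (W0 *v y) (B *v y))"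
      if "y \<in> block_space d k" for k y
    proof -
      have "cinner (W0 *v y) ((U - B) *v y) = 0"
        unfolding B_def by (rule cinner_off_block_part[OF that block_diagonal_mult_vec[OF W0(2) that]])
      then have "cinner (W0 *v y) (B *v y) = cinner (W0 *v y) (U *v y)"
        by (simp add: matrix_vector_mult_diff_rdistrib cinner_diff_right)
      then show ?thesis
        using cinner_maximiser_nonneg[OF W0 max that] by simp
    qed
    show "(1 - e) * norm y \<le> norm (B *v y)" for y
      using near[of y] norm_triangle_ineq2[of "U *v y" "B *v y"] norm_unitary_mult_vec[OF U]
      by (simp add: algebra_simps)
    show "norm (B *v y) \<le> (1 + e) * norm y" for y
      using near[of y] norm_triangle_ineq3[of "U *v y" "B *v y"] norm_unitary_mult_vec[OF U]
      by (simp add: algebra_simps norm_minus_commute)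
  qed
  have "norm ((U - W0) *v x) \<le> 2 * e * norm x" for x
    using near[of x] polar[of x] norm_triangle_ineq[of "U *v x - B *v x" "(B - W0) *v x"]
    by (simp add: matrix_vector_mult_diff_rdistrib)
  then show ?thesis
    by (rule op_norm_le)
qed

lemma one_le_cmod_of_nat_diff:
  assumes "(of_nat a :: complex) \<noteq> of_nat b"
  shows "1 \<le> cmod (of_nat b - of_nat a)"
proof -
  have "1 \<le> \<bar>real b - real a\<bar>"
    using assms by auto
  also have "\<dots> = cmod (of_nat b - of_nat a)"
    by (metis norm_of_real of_real_diff of_real_of_nat_eq real_norm_def)
  finally show ?thesis .
qed

theorem mainTheorem5:
  fixes D U :: "complex ^'n ^'n"
  assumes diag: "\<And>i j. i \<noteq> j \<Longrightarrow> D $ i $ j = 0"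
    and posint: "\<And>i. \<exists>k::nat. k > 0 \<and> D $ i $ i = of_nat k"
    and unitO: "unitary_matrix U"
  shows "\<exists>V. unitary_matrix V \<and> commutator V D = 0 \<and>
           (\<forall>W. unitary_matrix W \<and> commutator W D = 0 \<longrightarrow> op_norm (U - V) \<le> op_norm (U - W)) \<and>
           op_norm (U - V) \<le> 2 * real CARD('n) * op_norm (commutator U D)"
proof -
  define d where "d = (\<lambda>i. D$i$i)"
  have commutant: "commutator W D = 0 \<longleftrightarrow> block_diagonal d W" for W
    unfolding d_def by (rule commutator_diagonal_eq_0_iff[OF diag])
  define G where "G = {W::complex^'n^'n. unitary_matrix W \<and> commutator W D = 0}"
  have G: "compact G" "G \<noteq> {}"
    unfolding G_def using compact_unitary_commutant unitary_mat_1
    by (auto simp: commutator_def)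
  have "continuous_on G (\<lambda>W. Re (frobenius_inner W U))"
    unfolding frobenius_inner_def by (intro continuous_intros)
  then obtain W0 where W0: "W0 \<in> G"
    and max: "\<And>W. W \<in> G \<Longrightarrow> Re (frobenius_inner W U) \<le> Re (frobenius_inner W0 U)"
    using continuous_attains_sup[OF G] by blast
  have "continuous_on G (\<lambda>W. op_norm (U - W))"
    by (rule continuous_on_compose2[OF continuous_on_op_norm[of UNIV]]) (auto intro: continuous_intros)
  then obtain V where V: "V \<in> G"
    and min: "\<And>W. W \<in> G \<Longrightarrow> op_norm (U - V) \<le> op_norm (U - W)"
    using continuous_attains_inf[OF G] by blast
  have gap: "1 \<le> cmod (D$j$j - D$i$i)" if "D$i$i \<noteq> D$j$j" for i j
    using posint[of i] posint[of j] that by (metis one_le_cmod_of_nat_diff)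
  have "op_norm (U - W0) \<le> 2 * (real CARD('n) * op_norm (commutator U D))"
    using W0 max op_norm_off_block_part_le[OF diag gap]
    by (intro op_norm_diff_maximiser_le[OF unitO]) (auto simp: G_def commutant d_def)
  then show ?thesis
    using V min[OF W0] min unfolding G_def by auto
qed

end
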